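(* Let $0\le s<n$, $A\in M_{s+1,n-s}$ and $2\le j\le n-s$. There is a constant $K>0$ depending only on $A$ (and $n,j$) such that for all $w\in\mathcal S_{n+1,j}$: $$\max_{0\le i\le s}\ \max_{J\subset\{0,\dots,n\},\,\#J=j-1}\big|\langle(e_i+a_i)\wedge e_J,w\rangle\big|\le K\|R_Ac(w)\|$$ and $$\|R_Ac(w)\|\le K\max_{0\le i\le s}\ \max_{J\subset\{i+1,\dots,n\},\,\#J=j-1}\big|\langle(e_i+a_i)\wedge e_J,w\rangle\big|.$$
   Context: $V=\mathbb R^{n+1}$ with basis $e_0,\dots,e_n$, $V_0=\mathrm{span}(e_1,\dots,e_n)$; $e_J=e_{j_1}\wedge\dots\wedge e_{j_m}$ for $J=\{j_1<\dots<j_m\}$; $\bigwedge(V)$ carries the inner product making $\{e_J\}$ orthonormal. $\mathcal S_{n+1,j}$ is the set of $w=v_1\wedge\dots\wedge v_j$ with $v_1,\dots,v_j\in\mathbb Z^{n+1}$ linearly independent. Rows of $A$ are indexed $0,\dots,s$, columns $s+1,\dots,n$; $a_i=\sum_{k=s+1}^na_{i,k}e_k\in V$. $R_Ac(w)\in(\bigwedge^{j-1}V_0)^{s+1}$ is the vector whose $i$-th component is $\sum_{J\subset\{1,\dots,n\},\#J=j-1}\langle(e_i+a_i)\wedge e_J,w\rangle e_J$, with the Euclidean norm. *)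

theory Defs
  imports Complex_Main "HOL-Combinatorics.Permutations"
begin

text \<open>Vectors of V = R^(n+1) are functions nat => real (components 0..n used).
  Multivectors of degree j are coefficient functions on index sets I (card I = j),
  i.e. w = sum_I w(I) e_I.\<close>

definition ldet :: "nat \<Rightarrow> (nat \<Rightarrow> nat \<Rightarrow> real) \<Rightarrow> real" where
  "ldet m M = (\<Sum>p | p permutes {..<m}. of_int (sign p) * (\<Prod>r<m. M r (p r)))"

definition wedge :: "(nat \<Rightarrow> real) list \<Rightarrow> nat set \<Rightarrow> real" where
  "wedge vs I = (if finite I \<and> card I = length vs
      then ldet (length vs) (\<lambda>r c. (vs ! r) (sorted_list_of_set I ! c)) else 0)"

definition evec :: "nat \<Rightarrow> nat \<Rightarrow> real" where
  "evec k = (\<lambda>l. if l = k then 1 else 0)"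

definition mv_inner :: "nat \<Rightarrow> nat \<Rightarrow> (nat set \<Rightarrow> real) \<Rightarrow> (nat set \<Rightarrow> real) \<Rightarrow> real" where
  "mv_inner n j x y = (\<Sum>I\<in>{I. I \<subseteq> {0..n} \<and> card I = j}. x I * y I)"

definition avec :: "nat \<Rightarrow> nat \<Rightarrow> (nat \<Rightarrow> nat \<Rightarrow> real) \<Rightarrow> nat \<Rightarrow> nat \<Rightarrow> real" where
  "avec n s A i = (\<lambda>k. if s < k \<and> k \<le> n then A i k else 0)"

definition pairing :: "nat \<Rightarrow> nat \<Rightarrow> nat \<Rightarrow> (nat \<Rightarrow> nat \<Rightarrow> real) \<Rightarrow> nat \<Rightarrow> nat set
    \<Rightarrow> (nat set \<Rightarrow> real) \<Rightarrow> real" where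
  "pairing n j s A i J w =
     mv_inner n j (wedge ((\<lambda>k. evec i k + avec n s A i k) # map evec (sorted_list_of_set J))) w"

text \<open>Euclidean norm of R_A c(w) in (wedge^{j-1} V_0)^{s+1}.\<close>
definition RAc_norm :: "nat \<Rightarrow> nat \<Rightarrow> nat \<Rightarrow> (nat \<Rightarrow> nat \<Rightarrow> real) \<Rightarrow> (nat set \<Rightarrow> real) \<Rightarrow> real" where
  "RAc_norm n j s A w =
     sqrt (\<Sum>i\<le>s. \<Sum>J\<in>{J. J \<subseteq> {1..n} \<and> card J = j - 1}. (pairing n j s A i J w)\<^sup>2)"

definition S_int :: "nat \<Rightarrow> nat \<Rightarrow> (nat set \<Rightarrow> real) set" where
  "S_int n j = {w. \<exists>vs. length vs = j
      \<and> (\<forall>v\<in>set vs. (\<forall>k\<le>n. v k \<in> \<int>) \<and> (\<forall>k>n. v k = 0))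
      \<and> (\<forall>c::nat \<Rightarrow> real. (\<forall>k. (\<Sum>r<j. c r * (vs ! r) k) = 0) \<longrightarrow> (\<forall>r<j. c r = 0))
      \<and> w = wedge vs}"

end

theory Submission
  imports Defs "HOL-Analysis.L2_Norm"
begin

text \<open>Both inequalities follow from one reduction: every pairing
  \<open>\<langle>(e\<^sub>i + a\<^sub>i) \<wedge> e\<^sub>J, w\<rangle>\<close> with \<open>J \<subseteq> {0..n}\<close> is at most \<open>(1 + 2 \<Sum> |A\<^sub>l\<^sub>k|)\<^sup>j\<^sup>-\<^sup>1\<close> times
  the largest pairing with \<open>J \<subseteq> {i+1..n}\<close>. Those pairings are coordinates of \<open>R\<^sub>Ac(w)\<close>, and
  every coordinate is a pairing with \<open>J \<subseteq> {1..n}\<close>, which gives both bounds.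
  For the reduction, let \<open>l \<in> J\<close> with \<open>l \<le> i\<close>. Write \<open>e\<^sub>l = (e\<^sub>l + a\<^sub>l) - a\<^sub>l\<close>, where \<open>a\<^sub>l\<close> only
  involves \<open>e\<^sub>k\<close> with \<open>k > s \<ge> i\<close>. If \<open>l < i\<close>, exchange \<open>e\<^sub>l + a\<^sub>l\<close> with \<open>e\<^sub>i + a\<^sub>i\<close> and expand
  the latter the same way. Every resulting term has fewer entries of \<open>J\<close> that are at most
  the leading index.\<close>

lemma ldet_cong:
  assumes "\<And>r c. r < m \<Longrightarrow> M r c = M' r c"
  shows "ldet m M = ldet m M'"
  unfolding ldet_def by (intro sum.cong refl arg_cong2[where f="(*)"] prod.cong) (auto simp: assms)

lemma ldet_permute_rows:
  assumes q: "q permutes {..<m}"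
  shows "ldet m (\<lambda>r. M (q r)) = of_int (sign q) * ldet m M"
proof -
  have "ldet m (\<lambda>r. M (q r))
      = (\<Sum>p | p permutes {..<m}. of_int (sign (p \<circ> q)) * (\<Prod>r<m. M (q r) (p (q r))))"
    unfolding ldet_def by (subst sum_permutations_compose_right[OF q]) simp
  also have "\<dots> = (\<Sum>p | p permutes {..<m}. of_int (sign q) * (of_int (sign p) * (\<Prod>r<m. M r (p r))))"
  proof (rule sum.cong)
    fix p assume "p \<in> {p. p permutes {..<m}}"
    then have "permutation p" "permutation q"
      using q by (auto intro: permutation_permutes[THEN iffD2])
    moreover have "(\<Prod>r<m. M (q r) (p (q r))) = (\<Prod>r<m. M r (p r))"
      using prod.permute[OF q, of "\<lambda>r. M r (p r)"] by (simp add: o_def)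
    ultimately show "of_int (sign (p \<circ> q)) * (\<Prod>r<m. M (q r) (p (q r)))
        = of_int (sign q) * (of_int (sign p) * (\<Prod>r<m. M r (p r)))"
      by (simp add: sign_compose)
  qed simp
  finally show ?thesis by (simp add: ldet_def sum_distrib_left)
qed

lemma ldet_row_linear:
  assumes "r0 < m" "finite S"
  shows "ldet m (\<lambda>r c. if r = r0 then x c + (\<Sum>k\<in>S. a k * g k c) else M r c)
       = ldet m (\<lambda>r c. if r = r0 then x c else M r c)
         + (\<Sum>k\<in>S. a k * ldet m (\<lambda>r c. if r = r0 then g k c else M r c))"
proof -
  have split: "(\<Prod>r<m. f r) = f r0 * (\<Prod>r\<in>{..<m}-{r0}. f r)" for f :: "nat \<Rightarrow> real"
    using assms(1) by (simp add: prod.remove)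
  have other_rows: "(\<Prod>r\<in>{..<m}-{r0}. if r = r0 then h r else M r (p r)) = (\<Prod>r\<in>{..<m}-{r0}. M r (p r))"
    for h and p :: "nat \<Rightarrow> nat"
    by (rule prod.cong) auto
  show ?thesis
    unfolding ldet_def split
    by (simp add: other_rows sum_distrib_left sum_distrib_right algebra_simps sum.distrib sum.swap[of _ S])
qed

lemma wedge_permute:
  assumes p: "p permutes {..<length xs}"
  shows "wedge (permute_list p xs) I = of_int (sign p) * wedge xs I"
proof -
  have "ldet (length xs) (\<lambda>r c. (permute_list p xs ! r) (sorted_list_of_set I ! c))
      = ldet (length xs) (\<lambda>r c. (xs ! p r) (sorted_list_of_set I ! c))"
    by (rule ldet_cong) (simp add: permute_list_nth[OF p])
  then show ?thesis
    by (simp add: wedge_def ldet_permute_rows[OF p, of "\<lambda>r c. (xs ! r) (sorted_list_of_set I ! c)"])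
qed

lemma wedge_update_linear:
  assumes "r0 < length xs" "finite S"
  shows "wedge (xs[r0 := (\<lambda>t. x t + (\<Sum>k\<in>S. a k * g k t))]) I
       = wedge (xs[r0 := x]) I + (\<Sum>k\<in>S. a k * wedge (xs[r0 := g k]) I)"
proof -
  have row_update: "ldet (length xs) (\<lambda>r c. (xs[r0 := y] ! r) (sorted_list_of_set I ! c))
     = ldet (length xs) (\<lambda>r c. if r = r0 then y (sorted_list_of_set I ! c) else (xs ! r) (sorted_list_of_set I ! c))"
    for y
    by (rule ldet_cong) (simp add: nth_list_update)
  show ?thesis
  proof (cases "finite I \<and> card I = length xs")
    case True
    then show ?thesis by (simp add: wedge_def row_update ldet_row_linear[OF assms])
  next
    case False
    then show ?thesis by (auto simp: wedge_def)
  qed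
qed

lemma length_filter_update_less:
  fixes ks :: "'a::linorder list"
  assumes "r < length ks" "ks ! r \<le> i" "l \<le> i" "l < k"
  shows "length (filter (\<lambda>x. x \<le> l) (ks[r := k])) < length (filter (\<lambda>x. x \<le> i) ks)"
proof -
  define low where "low xs b = {t. t < length xs \<and> xs ! t \<le> b}" for xs :: "'a list" and b
  have "low (ks[r := k]) l \<subseteq> low ks i - {r}"
  proof
    fix t assume "t \<in> low (ks[r := k]) l"
    then have t: "t < length ks" "ks[r := k] ! t \<le> l" by (simp_all add: low_def)
    then have "t \<noteq> r" using assms(1,4) by (metis leD nth_list_update_eq)
    then show "t \<in> low ks i - {r}" using t assms(3) by (simp add: low_def)
  qed
  moreover have "r \<in> low ks i" using assms(1,2) by (simp add: low_def)
  moreover have "finite (low ks i)" by (simp add: low_def)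
  ultimately have "card (low (ks[r := k]) l) < card (low ks i)"
    by (metis card_Diff1_less card_mono finite_Diff order_le_less_trans)
  then show ?thesis
    by (simp only: length_filter_conv_card low_def)
qed

lemma abs_sum_mult_le:
  fixes c f :: "'a \<Rightarrow> real"
  assumes "\<And>k. k \<in> K \<Longrightarrow> \<bar>f k\<bar> \<le> B"
  shows "\<bar>\<Sum>k\<in>K. c k * f k\<bar> \<le> (\<Sum>k\<in>K. \<bar>c k\<bar>) * B"
proof -
  have "\<bar>\<Sum>k\<in>K. c k * f k\<bar> \<le> (\<Sum>k\<in>K. \<bar>c k\<bar> * \<bar>f k\<bar>)"
    by (simp add: abs_mult sum_abs[of "\<lambda>k. c k * f k", unfolded abs_mult])
  also have "\<dots> \<le> (\<Sum>k\<in>K. \<bar>c k\<bar> * B)"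
    by (intro sum_mono mult_left_mono assms) auto
  finally show ?thesis by (simp add: sum_distrib_right)
qed

locale alternating_multilinear =
  fixes F :: "(nat \<Rightarrow> real) list \<Rightarrow> real"
  assumes permute: "p permutes {..<length xs} \<Longrightarrow> F (permute_list p xs) = of_int (sign p) * F xs"
    and update_linear: "r < length xs \<Longrightarrow> finite (S :: nat set) \<Longrightarrow>
      F (xs[r := (\<lambda>t. x t + (\<Sum>k\<in>S. a k * g k t))]) = F (xs[r := x]) + (\<Sum>k\<in>S. a k * F (xs[r := g k]))"
begin

lemma eq_0_if_repeated:
  assumes "a \<noteq> b" "a < length xs" "b < length xs" "xs ! a = xs ! b"
  shows "F xs = 0"
proof -
  have swap: "transpose a b permutes {..<length xs}"
    using assms by (simp add: permutes_swap_id)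
  have "permute_list (transpose a b) xs = xs"
    using assms by (intro nth_equalityI) (auto simp: permute_list_nth[OF swap] transpose_def)
  then have "F xs = - F xs"
    using permute[OF swap] assms(1) by (simp add: sign_swap_id)
  then show ?thesis by simp
qed

lemma abs_eq_if_mset_eq:
  assumes "mset xs = mset ys"
  shows "\<bar>F xs\<bar> = \<bar>F ys\<bar>"
proof -
  obtain p where "p permutes {..<length ys}" "permute_list p ys = xs"
    using mset_eq_permutation[OF assms] .
  then show ?thesis
    using permute by (auto simp: abs_mult sign_def)
qed

lemma swap_head_update:
  assumes "r < length zs"
  shows "F (y # zs[r := x]) = - F (x # zs[r := y])"
proof -
  have swap: "transpose 0 (Suc r) permutes {..<length (x # zs[r := y])}"
    using assms by (simp add: permutes_swap_id)
  have "permute_list (transpose 0 (Suc r)) (x # zs[r := y]) = y # zs[r := x]"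
    using assms
    by (intro nth_equalityI) (auto simp: permute_list_nth[OF swap] transpose_def nth_list_update nth_Cons split: nat.split)
  then show ?thesis
    using permute[OF swap] by (simp add: sign_swap_id)
qed

lemma abs_le_if_sorted_le:
  assumes sorted_le: "\<And>J. J \<subseteq> X \<Longrightarrow> card J = length ks \<Longrightarrow> \<bar>F (x # map g (sorted_list_of_set J))\<bar> \<le> M"
    and "0 \<le> M" and "set ks \<subseteq> X"
  shows "\<bar>F (x # map g ks)\<bar> \<le> M"
proof (cases "distinct ks")
  case True
  then have "mset (x # map g ks) = mset (x # map g (sorted_list_of_set (set ks)))"
    by (simp add: sorted_list_of_set_sort_remdups distinct_remdups_id)
  then show ?thesis
    using abs_eq_if_mset_eq sorted_le[of "set ks"] assms(3) True by (metis distinct_card)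
next
  case False
  then obtain a b where "a \<noteq> b" "a < length ks" "b < length ks" "ks ! a = ks ! b"
    by (auto simp: distinct_conv_nth)
  then have "F (x # map g ks) = 0"
    by (intro eq_0_if_repeated[of "Suc a" "Suc b"]) auto
  then show ?thesis using \<open>0 \<le> M\<close> by simp
qed

end

definition evec_plus_avec :: "nat \<Rightarrow> nat \<Rightarrow> (nat \<Rightarrow> nat \<Rightarrow> real) \<Rightarrow> nat \<Rightarrow> nat \<Rightarrow> real" where
  "evec_plus_avec n s A i = (\<lambda>k. evec i k + avec n s A i k)"

lemma evec_plus_avec_expand:
  "evec_plus_avec n s A i = (\<lambda>t. evec i t + (\<Sum>k\<in>{s<..n}. A i k * evec k t))"
proof -
  have "(\<Sum>k\<in>{s<..n}. A i k * evec k t) = (\<Sum>k\<in>{s<..n}. if t = k then A i k else 0)" for t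
    by (rule sum.cong) (simp_all add: evec_def)
  then have "(\<Sum>k\<in>{s<..n}. A i k * evec k t) = avec n s A i t" for t
    by (simp add: avec_def)
  then show ?thesis by (simp add: evec_plus_avec_def)
qed

context alternating_multilinear
begin

lemma update_evec_plus_avec:
  assumes "r < length ks"
  shows "F (x # (map evec ks)[r := evec_plus_avec n s A i])
       = F (x # map evec (ks[r := i])) + (\<Sum>k\<in>{s<..n}. A i k * F (x # map evec (ks[r := k])))"
  using update_linear[of "Suc r" "x # map evec ks" "{s<..n}" "evec i" "A i" evec] assms
  by (simp add: evec_plus_avec_expand map_update)

lemma abs_le_exchange_step:
  fixes S B :: real
  assumes "s \<le> n" "i \<le> s" "0 \<le> B"
    and r: "r < length ks" "ks ! r \<le> i"
    and row_sum: "\<And>l. l \<le> s \<Longrightarrow> (\<Sum>k\<in>{s<..n}. \<bar>A l k\<bar>) \<le> S"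
    and exchanged: "\<And>l k. l \<le> i \<Longrightarrow> l < k \<Longrightarrow> k \<le> n \<Longrightarrow>
      \<bar>F (evec_plus_avec n s A l # map evec (ks[r := k]))\<bar> \<le> B"
  shows "\<bar>F (evec_plus_avec n s A i # map evec ks)\<bar> \<le> (1 + 2 * S) * B"
proof -
  let ?u = "evec_plus_avec n s A"
  define l where "l = ks ! r"
  have "l \<le> i" using r by (simp add: l_def)
  have "0 \<le> S" using row_sum[of 0] by (meson order_trans sum_nonneg abs_ge_zero le0)
  have sum_le: "\<bar>\<Sum>k\<in>{s<..n}. A i' k * F (?u l' # map evec (ks[r := k]))\<bar> \<le> S * B"
    if "i' \<le> s" "l' \<le> i" for i' l'
  proof -
    have "\<bar>F (?u l' # map evec (ks[r := k]))\<bar> \<le> B" if "k \<in> {s<..n}" for k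
      using that \<open>l' \<le> i\<close> \<open>i \<le> s\<close> by (intro exchanged) auto
    then have "\<bar>\<Sum>k\<in>{s<..n}. A i' k * F (?u l' # map evec (ks[r := k]))\<bar>
        \<le> (\<Sum>k\<in>{s<..n}. \<bar>A i' k\<bar>) * B"
      by (rule abs_sum_mult_le)
    also have "\<dots> \<le> S * B"
      using row_sum[OF \<open>i' \<le> s\<close>] \<open>0 \<le> B\<close> by (rule mult_right_mono)
    finally show ?thesis .
  qed
  let ?X = "F (?u i # (map evec ks)[r := ?u l])"
  let ?T = "\<Sum>k\<in>{s<..n}. A l k * F (?u i # map evec (ks[r := k]))"
  have "\<bar>?X\<bar> \<le> (1 + S) * B"
  proof (cases "l = i")
    case True
    then have "?X = 0"
      using r(1) by (intro eq_0_if_repeated[of 0 "Suc r"]) simp_all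
    then show ?thesis using \<open>0 \<le> S\<close> \<open>0 \<le> B\<close> by simp
  next
    case False
    have "\<bar>?X\<bar> = \<bar>F (?u l # (map evec ks)[r := ?u i])\<bar>"
      using swap_head_update[of r "map evec ks" "?u i" "?u l"] r(1) by simp
    also have "\<dots> \<le> \<bar>F (?u l # map evec (ks[r := i]))\<bar>
        + \<bar>\<Sum>k\<in>{s<..n}. A i k * F (?u l # map evec (ks[r := k]))\<bar>"
      unfolding update_evec_plus_avec[OF r(1)] by (rule abs_triangle_ineq)
    also have "\<dots> \<le> B + S * B"
      using False \<open>l \<le> i\<close> \<open>i \<le> s\<close> \<open>s \<le> n\<close> by (intro add_mono exchanged sum_le) simp_all
    finally show ?thesis by (simp add: algebra_simps)
  qed
  moreover have "\<bar>?T\<bar> \<le> S * B"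
    using \<open>l \<le> i\<close> \<open>i \<le> s\<close> by (intro sum_le) simp_all
  moreover have "F (?u i # map evec ks) = ?X - ?T"
    using update_evec_plus_avec[OF r(1), of "?u i" n s A l] by (simp add: l_def)
  ultimately show ?thesis
    using abs_triangle_ineq4[of ?X ?T] by (simp add: algebra_simps)
qed

lemma abs_le_increasing_bound_pow_count:
  fixes M S :: real
  assumes "s \<le> n" "0 \<le> M"
    and increasing: "\<And>i J. i \<le> s \<Longrightarrow> J \<subseteq> {i+1..n} \<Longrightarrow> card J = m \<Longrightarrow>
      \<bar>F (evec_plus_avec n s A i # map evec (sorted_list_of_set J))\<bar> \<le> M"
    and row_sum: "\<And>l. l \<le> s \<Longrightarrow> (\<Sum>k\<in>{s<..n}. \<bar>A l k\<bar>) \<le> S"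
  shows "length (filter (\<lambda>k. k \<le> i) ks) \<le> b \<Longrightarrow> i \<le> s \<Longrightarrow> length ks = m \<Longrightarrow> set ks \<subseteq> {..n}
    \<Longrightarrow> \<bar>F (evec_plus_avec n s A i # map evec ks)\<bar> \<le> (1 + 2 * S) ^ b * M"
proof (induction b arbitrary: i ks)
  case (0 i ks)
  then have "\<forall>k\<in>set ks. i < k"
    by (simp add: filter_empty_conv not_le)
  then have "set ks \<subseteq> {i+1..n}"
    using 0(4) by fastforce
  then show ?case
    using abs_le_if_sorted_le[of "{i+1..n}" ks _ evec M] increasing \<open>0 \<le> M\<close> 0 by simp
next
  case (Suc b i ks)
  let ?u = "evec_plus_avec n s A"
  have "0 \<le> S" using row_sum[of 0] by (meson order_trans sum_nonneg abs_ge_zero le0)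
  show ?case
  proof (cases "length (filter (\<lambda>k. k \<le> i) ks) \<le> b")
    case True
    then have "\<bar>F (?u i # map evec ks)\<bar> \<le> (1 + 2 * S) ^ b * M"
      using Suc by blast
    also have "\<dots> \<le> (1 + 2 * S) ^ Suc b * M"
      using \<open>0 \<le> S\<close> \<open>0 \<le> M\<close> by (intro mult_right_mono power_increasing) auto
    finally show ?thesis .
  next
    case False
    then obtain r where r: "r < length ks" "ks ! r \<le> i"
      by (metis (mono_tags, lifting) filter_False in_set_conv_nth le0 list.size(3))
    have "\<bar>F (?u l # map evec (ks[r := k]))\<bar> \<le> (1 + 2 * S) ^ b * M"
      if "l \<le> i" "l < k" "k \<le> n" for l k
    proof (rule Suc.IH)
      show "length (filter (\<lambda>x. x \<le> l) (ks[r := k])) \<le> b"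
        using length_filter_update_less[OF r that(1,2)] Suc.prems(1) by simp
      show "set (ks[r := k]) \<subseteq> {..n}"
        using set_update_subset_insert[of ks r k] Suc.prems(4) that(3) by auto
    qed (use that Suc.prems in auto)
    then show ?thesis
      using abs_le_exchange_step[OF \<open>s \<le> n\<close> Suc.prems(2) _ r row_sum] \<open>0 \<le> S\<close> \<open>0 \<le> M\<close>
      by (simp add: mult.assoc)
  qed
qed

lemma abs_le_increasing_bound:
  fixes M S :: real
  assumes "s \<le> n" "0 \<le> M"
    and increasing: "\<And>i J. i \<le> s \<Longrightarrow> J \<subseteq> {i+1..n} \<Longrightarrow> card J = m \<Longrightarrow>
      \<bar>F (evec_plus_avec n s A i # map evec (sorted_list_of_set J))\<bar> \<le> M"
    and row_sum: "\<And>l. l \<le> s \<Longrightarrow> (\<Sum>k\<in>{s<..n}. \<bar>A l k\<bar>) \<le> S"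
    and "i \<le> s" "length ks = m" "set ks \<subseteq> {..n}"
  shows "\<bar>F (evec_plus_avec n s A i # map evec ks)\<bar> \<le> (1 + 2 * S) ^ m * M"
  using abs_le_increasing_bound_pow_count[OF assms(1-4)] assms(5-7) length_filter_le[of _ ks] by simp

end

lemma alternating_multilinear_inner_wedge:
  "alternating_multilinear (\<lambda>xs. mv_inner n j (wedge xs) w)"
proof
  show "mv_inner n j (wedge (permute_list p xs)) w = of_int (sign p) * mv_inner n j (wedge xs) w"
    if "p permutes {..<length xs}" for p xs
    by (simp add: mv_inner_def wedge_permute[OF that] sum_distrib_left mult.assoc)
  show "mv_inner n j (wedge (xs[r := (\<lambda>t. x t + (\<Sum>k\<in>S. a k * g k t))])) w
      = mv_inner n j (wedge (xs[r := x])) w + (\<Sum>k\<in>S. a k * mv_inner n j (wedge (xs[r := g k])) w)"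
    if "r < length xs" "finite S" for r xs and S :: "nat set" and x a g
    by (simp add: mv_inner_def wedge_update_linear[OF that] sum.distrib distrib_right
        sum_distrib_left sum_distrib_right mult.assoc sum.swap[of _ S])
qed

text \<open>\<open>J\<close> ranges over subsets of \<open>{lo i..n}\<close>: the two maxima of the theorem are
  \<open>lo = (\<lambda>_. 0)\<close> and \<open>lo = Suc\<close>.\<close>

definition max_pairing ::
    "nat \<Rightarrow> nat \<Rightarrow> nat \<Rightarrow> (nat \<Rightarrow> nat \<Rightarrow> real) \<Rightarrow> (nat \<Rightarrow> nat) \<Rightarrow> (nat set \<Rightarrow> real) \<Rightarrow> real" where
  "max_pairing n j s A lo w =
     Max {\<bar>pairing n j s A i J w\<bar> | i J. i \<le> s \<and> J \<subseteq> {lo i..n} \<and> card J = j - 1}"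

lemma finite_pairing_values:
  "finite {\<bar>pairing n j s A i J w\<bar> | i J. i \<le> s \<and> J \<subseteq> {lo i..n} \<and> card J = j - 1}"
proof -
  let ?I = "{(i, J). i \<le> s \<and> J \<subseteq> {lo i..n} \<and> card J = j - 1}"
  have "finite ?I"
    by (rule finite_subset[of _ "{..s} \<times> Pow {..n}"]) auto
  moreover have "{\<bar>pairing n j s A i J w\<bar> | i J. i \<le> s \<and> J \<subseteq> {lo i..n} \<and> card J = j - 1}
      = (\<lambda>(i, J). \<bar>pairing n j s A i J w\<bar>) ` ?I"
    by force
  ultimately show ?thesis by simp
qed

lemma abs_pairing_le_max_pairing:
  assumes "i \<le> s" "J \<subseteq> {lo i..n}" "card J = j - 1"
  shows "\<bar>pairing n j s A i J w\<bar> \<le> max_pairing n j s A lo w"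
  unfolding max_pairing_def using assms by (intro Max_ge[OF finite_pairing_values]) blast

lemma max_pairing_nonneg:
  assumes "lo 0 \<le> 1" "j - 1 \<le> n"
  shows "0 \<le> max_pairing n j s A lo w"
  using abs_pairing_le_max_pairing[of 0 s "{1..j - 1}" lo n j A w] assms by simp

lemma max_pairing_le:
  assumes "lo 0 \<le> 1" "j - 1 \<le> n"
    and "\<And>i J. i \<le> s \<Longrightarrow> J \<subseteq> {lo i..n} \<Longrightarrow> card J = j - 1 \<Longrightarrow> \<bar>pairing n j s A i J w\<bar> \<le> B"
  shows "max_pairing n j s A lo w \<le> B"
proof -
  have "\<bar>pairing n j s A 0 {1..j - 1} w\<bar>
      \<in> {\<bar>pairing n j s A i J w\<bar> | i J. i \<le> s \<and> J \<subseteq> {lo i..n} \<and> card J = j - 1}"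
    using assms(1,2) by fastforce
  then show ?thesis
    unfolding max_pairing_def using assms(3) by (subst Max_le_iff[OF finite_pairing_values]) blast+
qed

definition exchange_const :: "nat \<Rightarrow> nat \<Rightarrow> nat \<Rightarrow> (nat \<Rightarrow> nat \<Rightarrow> real) \<Rightarrow> real" where
  "exchange_const n j s A = (1 + 2 * (\<Sum>l\<le>s. \<Sum>k\<in>{s<..n}. \<bar>A l k\<bar>)) ^ (j - 1)"

lemma one_le_exchange_const: "1 \<le> exchange_const n j s A"
  unfolding exchange_const_def by (intro one_le_power) (simp add: sum_nonneg)

lemma abs_pairing_le_max_increasing:
  assumes "s \<le> n" "j - 1 \<le> n" "i \<le> s" "J \<subseteq> {0..n}" "card J = j - 1"
  shows "\<bar>pairing n j s A i J w\<bar> \<le> exchange_const n j s A * max_pairing n j s A Suc w"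
proof -
  interpret alternating_multilinear "\<lambda>xs. mv_inner n j (wedge xs) w"
    by (rule alternating_multilinear_inner_wedge)
  have pairing_eq: "pairing n j s A i' J' w
      = mv_inner n j (wedge (evec_plus_avec n s A i' # map evec (sorted_list_of_set J'))) w" for i' J'
    by (simp add: pairing_def evec_plus_avec_def)
  have "finite J" using assms(4) finite_subset by blast
  have "\<bar>mv_inner n j (wedge (evec_plus_avec n s A i # map evec (sorted_list_of_set J))) w\<bar>
    \<le> exchange_const n j s A * max_pairing n j s A Suc w"
    unfolding exchange_const_def
  proof (rule abs_le_increasing_bound)
    show "0 \<le> max_pairing n j s A Suc w"
      using assms(2) by (rule max_pairing_nonneg[rotated]) simp
    show "\<bar>mv_inner n j (wedge (evec_plus_avec n s A i' # map evec (sorted_list_of_set J'))) w\<bar>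
        \<le> max_pairing n j s A Suc w"
      if "i' \<le> s" "J' \<subseteq> {i' + 1..n}" "card J' = j - 1" for i' J'
      using abs_pairing_le_max_pairing[of i' s J' Suc n j A w] that by (simp add: pairing_eq)
    show "(\<Sum>k\<in>{s<..n}. \<bar>A l k\<bar>) \<le> (\<Sum>l\<le>s. \<Sum>k\<in>{s<..n}. \<bar>A l k\<bar>)" if "l \<le> s" for l
      using that by (intro member_le_sum[where f="\<lambda>l. \<Sum>k\<in>{s<..n}. \<bar>A l k\<bar>"]) (auto intro: sum_nonneg)
  qed (use assms \<open>finite J\<close> in auto)
  then show ?thesis by (simp add: pairing_eq)
qed

lemma max_all_le_max_increasing:
  assumes "s \<le> n" "j - 1 \<le> n"
  shows "max_pairing n j s A (\<lambda>_. 0) w \<le> exchange_const n j s A * max_pairing n j s A Suc w"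
  using assms by (intro max_pairing_le abs_pairing_le_max_increasing) auto

lemma RAc_norm_eq_L2_set:
  "RAc_norm n j s A w
    = L2_set (\<lambda>(i, J). pairing n j s A i J w) ({..s} \<times> {J. J \<subseteq> {1..n} \<and> card J = j - 1})"
  by (simp add: RAc_norm_def L2_set_def sum.cartesian_product case_prod_beta)

lemma abs_pairing_le_RAc_norm:
  assumes "i \<le> s" "J \<subseteq> {1..n}" "card J = j - 1"
  shows "\<bar>pairing n j s A i J w\<bar> \<le> RAc_norm n j s A w"
proof -
  have "finite {J. J \<subseteq> {1..n} \<and> card J = j - 1}" by simp
  then have "\<bar>pairing n j s A i J w\<bar>
      \<le> L2_set (\<lambda>(i, J). \<bar>pairing n j s A i J w\<bar>) ({..s} \<times> {J. J \<subseteq> {1..n} \<and> card J = j - 1})"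
    using assms
    by (intro member_le_L2_set[where f="\<lambda>(i, J). \<bar>pairing n j s A i J w\<bar>" and i="(i, J)", simplified]) auto
  then show ?thesis
    unfolding RAc_norm_eq_L2_set by (simp add: L2_set_def case_prod_beta)
qed

lemma max_increasing_le_RAc_norm:
  assumes "j - 1 \<le> n"
  shows "max_pairing n j s A Suc w \<le> RAc_norm n j s A w"
  using assms by (intro max_pairing_le abs_pairing_le_RAc_norm) auto

lemma RAc_norm_le:
  assumes "0 \<le> B"
    and "\<And>i J. i \<le> s \<Longrightarrow> J \<subseteq> {1..n} \<Longrightarrow> card J = j - 1 \<Longrightarrow> \<bar>pairing n j s A i J w\<bar> \<le> B"
  shows "RAc_norm n j s A w \<le> sqrt (card ({..s} \<times> {J. J \<subseteq> {1..n} \<and> card J = j - 1})) * B"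
proof -
  let ?I = "{..s} \<times> {J. J \<subseteq> {1..n} \<and> card J = j - 1}"
  have "RAc_norm n j s A w = L2_set (\<lambda>(i, J). \<bar>pairing n j s A i J w\<bar>) ?I"
    unfolding RAc_norm_eq_L2_set by (simp add: L2_set_def case_prod_beta)
  also have "\<dots> \<le> L2_set (\<lambda>_. B) ?I"
    using assms by (intro L2_set_mono) auto
  also have "\<dots> = sqrt (card ?I) * B"
    using \<open>0 \<le> B\<close> by (simp add: L2_set_constant)
  finally show ?thesis .
qed

lemma RAc_norm_le_max_increasing:
  assumes "s \<le> n" "j - 1 \<le> n"
  shows "RAc_norm n j s A w \<le> sqrt (card ({..s} \<times> {J. J \<subseteq> {1..n} \<and> card J = j - 1}))
    * (exchange_const n j s A * max_pairing n j s A Suc w)"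
proof (rule RAc_norm_le)
  show "0 \<le> exchange_const n j s A * max_pairing n j s A Suc w"
    using one_le_exchange_const max_pairing_nonneg assms(2) by (simp add: order_trans[OF zero_le_one])
  show "\<bar>pairing n j s A i J w\<bar> \<le> exchange_const n j s A * max_pairing n j s A Suc w"
    if "i \<le> s" "J \<subseteq> {1..n}" "card J = j - 1" for i J
    using assms that by (intro abs_pairing_le_max_increasing) fastforce+
qed

theorem lemma5p5:
  fixes n s j :: nat and A :: "nat \<Rightarrow> nat \<Rightarrow> real"
  assumes "s < n" and "2 \<le> j" and "j \<le> n - s"
  shows "\<exists>K>0. \<forall>w\<in>S_int n j.
    Max {\<bar>pairing n j s A i J w\<bar> | i J. i \<le> s \<and> J \<subseteq> {0..n} \<and> card J = j - 1}
      \<le> K * RAc_norm n j s A w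
    \<and> RAc_norm n j s A w
      \<le> K * Max {\<bar>pairing n j s A i J w\<bar> | i J. i \<le> s \<and> J \<subseteq> {i+1..n} \<and> card J = j - 1}"
proof -
  define C where "C = exchange_const n j s A"
  define N where "N = card ({..s} \<times> {J. J \<subseteq> {1..n} \<and> card J = j - 1})"
  have "s \<le> n" "j - 1 \<le> n" using assms by auto
  have "1 \<le> C" unfolding C_def by (rule one_le_exchange_const)
  show ?thesis
  proof (intro exI[of _ "C * (1 + sqrt N)"] conjI ballI)
    show "0 < C * (1 + sqrt N)" using \<open>1 \<le> C\<close> by (simp add: add_pos_nonneg)
    fix w
    let ?R = "RAc_norm n j s A w" and ?M = "max_pairing n j s A Suc w"
    have "0 \<le> ?M" using \<open>j - 1 \<le> n\<close> by (intro max_pairing_nonneg) simp_all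
    have "?M \<le> ?R" using \<open>j - 1 \<le> n\<close> by (rule max_increasing_le_RAc_norm)
    have "max_pairing n j s A (\<lambda>_. 0) w \<le> C * ?M"
      unfolding C_def using \<open>s \<le> n\<close> \<open>j - 1 \<le> n\<close> by (rule max_all_le_max_increasing)
    also have "\<dots> \<le> C * ?R"
      using \<open>?M \<le> ?R\<close> \<open>1 \<le> C\<close> by simp
    also have "\<dots> \<le> C * (1 + sqrt N) * ?R"
      using \<open>?M \<le> ?R\<close> \<open>0 \<le> ?M\<close> \<open>1 \<le> C\<close> by (simp add: algebra_simps)
    finally show "Max {\<bar>pairing n j s A i J w\<bar> | i J. i \<le> s \<and> J \<subseteq> {0..n} \<and> card J = j - 1}
      \<le> C * (1 + sqrt N) * ?R"
      by (simp add: max_pairing_def)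
    have "?R \<le> sqrt N * (C * ?M)"
      unfolding C_def N_def using \<open>s \<le> n\<close> \<open>j - 1 \<le> n\<close> by (rule RAc_norm_le_max_increasing)
    also have "\<dots> \<le> C * (1 + sqrt N) * ?M"
      using \<open>0 \<le> ?M\<close> \<open>1 \<le> C\<close> by (simp add: algebra_simps)
    finally show "?R \<le> C * (1 + sqrt N)
      * Max {\<bar>pairing n j s A i J w\<bar> | i J. i \<le> s \<and> J \<subseteq> {i+1..n} \<and> card J = j - 1}"
      by (simp add: max_pairing_def)
  qed
qed

end
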